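(* Let $A_1,\ldots,A_r$ be non-empty, pairwise disjoint finite sets and $L=\partial\Delta^{A_1}*\cdots*\partial\Delta^{A_r}$. Then: (1) $\mathbb{R}\mathcal{Z}_L=S^{|A_1|-1}\times\cdots\times S^{|A_r|-1}$ (via $\mathbb{R}\mathcal{Z}_{\partial\Delta^{A_i}}=S^{|A_i|-1}$); (2) if $T=\{(x_1,\ldots,x_r)\in S^{|A_1|-1}\times\cdots\times S^{|A_r|-1}\mid x_i\text{ is the basepoint for some }i\}$ is the fat wedge, then the natural inclusion $T\to\mathbb{R}\mathcal{Z}_L^{|A_1|+\cdots+|A_r|-1}$ is a homotopy equivalence.
   Context: $\Delta^S$ is the full simplex on $S$, $\partial\Delta^S$ its boundary (proper subsets of $S$), $*$ the join. For a simplicial complex $K$ on vertex set $V$ with $|V|=n$, the real moment-angle complex is $\mathbb{R}\mathcal{Z}_K=\bigcup_{\sigma\in K}\prod_{v\in V}Y_v\subset (CS^0)^V$ where $Y_v=CS^0$ (reduced cone, an interval) if $v\in\sigma$ and $Y_v=S^0$ otherwise, with basepoint the basepoint of $S^0$. Its fat wedge filtration is $\mathbb{R}\mathcal{Z}_K^i=\{(x_v)\in\mathbb{R}\mathcal{Z}_K\mid\text{at least }n-i\text{ of the }x_v\text{ are the basepoint}\}$, $0\le i\le n$. The basepoint of $S^{|A_i|-1}=\mathbb{R}\mathcal{Z}_{\partial\Delta^{A_i}}$ is the point with all coordinates at the basepoint. *)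

theory Defs
  imports "HOL-Analysis.Analysis"
begin

text \<open>Conventions: the reduced cone CS^0 is the interval [0,1], S^0 = {0,1} and the
basepoint is 0. Simplicial complexes are families of faces (sets of vertices).\<close>

definition bdry_simplex :: "'a set \<Rightarrow> 'a set set" where
  "bdry_simplex S = {\<sigma>. \<sigma> \<subset> S}"

definition cx_join :: "(nat \<Rightarrow> 'a set set) \<Rightarrow> nat \<Rightarrow> 'a set set" where
  "cx_join K r = {\<Union>i<r. \<sigma> i | \<sigma>. \<forall>i<r. \<sigma> i \<in> K i}"

text \<open>Real moment-angle complex of K on vertex set V, inside (CS^0)^V = [0,1]^V.\<close>
definition rmac :: "'a set \<Rightarrow> 'a set set \<Rightarrow> ('a \<Rightarrow> real) set" where
  "rmac V K = (\<Union>\<sigma>\<in>K. PiE V (\<lambda>v. if v \<in> \<sigma> then {0..1} else {0,1}))"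

definition rmac_top :: "'a set \<Rightarrow> 'a set set \<Rightarrow> ('a \<Rightarrow> real) topology" where
  "rmac_top V K = subtopology (product_topology (\<lambda>_. euclideanreal) V) (rmac V K)"

definition rmac_fw :: "'a set \<Rightarrow> 'a set set \<Rightarrow> nat \<Rightarrow> ('a \<Rightarrow> real) set" where
  "rmac_fw V K i = {x \<in> rmac V K. card V - i \<le> card {v \<in> V. x v = 0}}"

definition homotopy_equivalence_map ::
  "'a topology \<Rightarrow> 'b topology \<Rightarrow> ('a \<Rightarrow> 'b) \<Rightarrow> bool" where
  "homotopy_equivalence_map X Y f \<longleftrightarrow> continuous_map X Y f \<and>
     (\<exists>g. continuous_map Y X g \<and> homotopic_with (\<lambda>h. True) X X (g \<circ> f) id \<and>
          homotopic_with (\<lambda>h. True) Y Y (f \<circ> g) id)"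

end

theory Submission
  imports Defs
begin

text \<open>A face of the join L is a union of proper faces, one in each block, so a point lies
in the moment-angle complex of L exactly when its restriction to every block A i lies on the
boundary of the cube [0,1]^(A i), i.e. in the sphere of that block; this gives the product
decomposition. A point of the stage card V - 1 of the fat wedge filtration has a zero coordinate,
so one of its blocks lies in the contractible part of its sphere where some coordinate vanishes.
Each sphere admits a homotopy of the identity that keeps this part and the base point invariant
and collapses this part to the base point at time 1. Applied blockwise, it preserves both the fat
wedge and the filtration stage, and at time 1 it maps the stage into the fat wedge; so the time-1
map is a homotopy inverse of the inclusion.\<close>

lemma rmac_bdry_simplex:
  "rmac A (bdry_simplex A) =
     {y \<in> extensional A. (\<forall>v\<in>A. y v \<in> {0..1}) \<and> (\<exists>v\<in>A. y v \<in> {0,1})}"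
proof (intro set_eqI iffI)
  fix y assume "y \<in> rmac A (bdry_simplex A)"
  then obtain \<sigma> where "\<sigma> \<subset> A" and y: "y \<in> (\<Pi>\<^sub>E v\<in>A. if v \<in> \<sigma> then {0..1} else {0,1})"
    by (auto simp: rmac_def bdry_simplex_def)
  moreover from \<open>\<sigma> \<subset> A\<close> obtain w where "w \<in> A" "w \<notin> \<sigma>" by blast
  ultimately show "y \<in> {y \<in> extensional A. (\<forall>v\<in>A. y v \<in> {0..1::real}) \<and> (\<exists>v\<in>A. y v \<in> {0,1})}"
    by (force simp: PiE_iff split: if_splits)
next
  fix y assume "y \<in> {y \<in> extensional A. (\<forall>v\<in>A. y v \<in> {0..1::real}) \<and> (\<exists>v\<in>A. y v \<in> {0,1})}"
  then obtain w where y: "y \<in> extensional A" "\<forall>v\<in>A. y v \<in> {0..1}" and "w \<in> A" "y w \<in> {0,1}"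
    by blast
  then have "A - {w} \<in> bdry_simplex A" "y \<in> (\<Pi>\<^sub>E v\<in>A. if v \<in> A - {w} then {0..1} else {0,1})"
    by (auto simp: bdry_simplex_def PiE_iff)
  then show "y \<in> rmac A (bdry_simplex A)"
    unfolding rmac_def by blast
qed

lemma rmac_cx_join:
  assumes disj: "\<And>i j. i < r \<Longrightarrow> j < r \<Longrightarrow> i \<noteq> j \<Longrightarrow> A i \<inter> A j = {}"
    and faces: "\<And>i. i < r \<Longrightarrow> K i \<subseteq> Pow (A i)"
  shows "rmac (\<Union>i<r. A i) (cx_join K r) =
           {x \<in> extensional (\<Union>i<r. A i). \<forall>i<r. restrict x (A i) \<in> rmac (A i) (K i)}"
proof -
  have union_in_block: "v \<in> (\<Union>j<r. \<sigma> j) \<longleftrightarrow> v \<in> \<sigma> i"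
    if "\<forall>j<r. \<sigma> j \<in> K j" "i < r" "v \<in> A i" for \<sigma> i v
    using that disj faces by blast
  show ?thesis
  proof (intro set_eqI iffI)
    fix x assume "x \<in> rmac (\<Union>i<r. A i) (cx_join K r)"
    then obtain \<sigma> where \<sigma>: "\<forall>i<r. \<sigma> i \<in> K i"
      and x: "x \<in> (\<Pi>\<^sub>E v\<in>(\<Union>i<r. A i). if v \<in> (\<Union>i<r. \<sigma> i) then {0..1} else {0,1})"
      by (auto simp: rmac_def cx_join_def)
    have "restrict x (A i) \<in> rmac (A i) (K i)" if "i < r" for i
    proof -
      have "x v \<in> (if v \<in> \<sigma> i then {0..1} else {0,1})" if "v \<in> A i" for v
      proof -
        have "v \<in> (\<Union>i<r. A i)" using \<open>i < r\<close> that by blast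
        from PiE_mem[OF x this] show ?thesis
          unfolding union_in_block[OF \<sigma> \<open>i < r\<close> that] .
      qed
      then have "restrict x (A i) \<in> (\<Pi>\<^sub>E v\<in>A i. if v \<in> \<sigma> i then {0..1} else {0,1})"
        by auto
      then show ?thesis
        unfolding rmac_def using \<sigma> \<open>i < r\<close> by (intro UN_I[of "\<sigma> i"]) auto
    qed
    moreover have "x \<in> extensional (\<Union>i<r. A i)"
      using x by (simp add: PiE_iff)
    ultimately show "x \<in> {x \<in> extensional (\<Union>i<r. A i). \<forall>i<r. restrict x (A i) \<in> rmac (A i) (K i)}"
      by blast
  next
    fix x assume "x \<in> {x \<in> extensional (\<Union>i<r. A i). \<forall>i<r. restrict x (A i) \<in> rmac (A i) (K i)}"
    then have ext: "x \<in> extensional (\<Union>i<r. A i)"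
      and faces_exist: "\<forall>i\<in>{..<r}. \<exists>\<sigma>. \<sigma> \<in> K i \<and>
             restrict x (A i) \<in> (\<Pi>\<^sub>E v\<in>A i. if v \<in> \<sigma> then {0..1} else {0,1})"
      by (auto simp: rmac_def)
    obtain \<sigma> where "\<forall>i\<in>{..<r}. \<sigma> i \<in> K i \<and>
             restrict x (A i) \<in> (\<Pi>\<^sub>E v\<in>A i. if v \<in> \<sigma> i then {0..1} else {0,1})"
      using bchoice[OF faces_exist] by blast
    then have \<sigma>: "\<forall>i<r. \<sigma> i \<in> K i"
      and x: "\<And>i. i < r \<Longrightarrow> restrict x (A i) \<in> (\<Pi>\<^sub>E v\<in>A i. if v \<in> \<sigma> i then {0..1} else {0,1})"
      by auto
    have "x v \<in> (if v \<in> (\<Union>i<r. \<sigma> i) then {0..1} else {0,1})" if "i < r" "v \<in> A i" for i v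
      using PiE_mem[OF x[OF \<open>i < r\<close>] \<open>v \<in> A i\<close>] union_in_block[OF \<sigma> that] that by simp
    with ext have "x \<in> (\<Pi>\<^sub>E v\<in>(\<Union>i<r. A i). if v \<in> (\<Union>i<r. \<sigma> i) then {0..1} else {0,1})"
      by (auto simp: PiE_iff)
    moreover have "(\<Union>i<r. \<sigma> i) \<in> cx_join K r"
      using \<sigma> by (auto simp: cx_join_def)
    ultimately show "x \<in> rmac (\<Union>i<r. A i) (cx_join K r)"
      unfolding rmac_def by blast
  qed
qed

definition glue_blocks :: "('i \<Rightarrow> 'v set) \<Rightarrow> 'i set \<Rightarrow> ('i \<Rightarrow> 'v \<Rightarrow> 'b) \<Rightarrow> 'v \<Rightarrow> 'b" where
  "glue_blocks A I y = (\<lambda>v\<in>(\<Union>i\<in>I. A i). y (SOME i. i \<in> I \<and> v \<in> A i) v)"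

lemma glue_blocks_apply:
  assumes "disjoint_family_on A I" "i \<in> I" "v \<in> A i"
  shows "glue_blocks A I y v = y i v"
proof -
  have "(SOME i. i \<in> I \<and> v \<in> A i) = i"
    by (rule some_equality) (use assms in \<open>auto simp: disjoint_family_on_def\<close>)
  with assms show ?thesis
    by (auto simp: glue_blocks_def)
qed

lemma restrict_glue_blocks:
  assumes "disjoint_family_on A I" "i \<in> I" "y i \<in> extensional (A i)"
  shows "restrict (glue_blocks A I y) (A i) = y i"
proof
  fix v
  show "restrict (glue_blocks A I y) (A i) v = y i v"
    using assms glue_blocks_apply[OF assms(1,2)] by (cases "v \<in> A i") (auto simp: extensional_def)
qed

lemma continuous_map_restrict:
  assumes "B \<subseteq> V"
  shows "continuous_map (product_topology X V) (product_topology X B) (\<lambda>x. restrict x B)"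
  using assms by (auto simp: continuous_map_componentwise intro!: continuous_intros)

lemma continuous_map_glue_blocks:
  assumes "disjoint_family_on A I"
  shows "continuous_map (product_topology (\<lambda>i. product_topology X (A i)) I)
           (product_topology X (\<Union>i\<in>I. A i)) (glue_blocks A I)"
proof (subst continuous_map_componentwise, intro conjI ballI)
  show "glue_blocks A I ` topspace (product_topology (\<lambda>i. product_topology X (A i)) I)
          \<subseteq> extensional (\<Union>i\<in>I. A i)"
    by (auto simp: glue_blocks_def)
next
  fix v assume "v \<in> (\<Union>i\<in>I. A i)"
  then obtain i where i: "i \<in> I" "v \<in> A i" by blast
  have "continuous_map (product_topology (\<lambda>i. product_topology X (A i)) I) (X v) (\<lambda>y. y i v)"
    using continuous_map_compose[OF continuous_map_product_projection[OF i(1), of "\<lambda>i. product_topology X (A i)"]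
        continuous_map_product_projection[OF i(2), of X]]
    by (simp add: o_def)
  then show "continuous_map (product_topology (\<lambda>i. product_topology X (A i)) I) (X v)
               (\<lambda>y. glue_blocks A I y v)"
    by (simp add: glue_blocks_apply[OF assms i])
qed

lemma homeomorphic_map_restrict_blocks:
  assumes disj: "disjoint_family_on A I"
    and T: "\<And>i. i \<in> I \<Longrightarrow> T i \<subseteq> topspace (product_topology X (A i))"
  shows "homeomorphic_map
           (subtopology (product_topology X (\<Union>i\<in>I. A i))
              {x \<in> extensional (\<Union>i\<in>I. A i). \<forall>i\<in>I. restrict x (A i) \<in> T i})
           (product_topology (\<lambda>i. subtopology (product_topology X (A i)) (T i)) I)
           (\<lambda>x. \<lambda>i\<in>I. restrict x (A i))"
    (is "homeomorphic_map (subtopology ?P ?S) ?Q ?F")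
proof -
  have topQ: "topspace ?Q = (\<Pi>\<^sub>E i\<in>I. T i)"
    using T by (auto simp: PiE_iff)
  have restrict_glue: "restrict (glue_blocks A I y) (A i) = y i" if "y \<in> topspace ?Q" "i \<in> I" for y i
  proof -
    have "y i \<in> topspace (product_topology X (A i))"
      using that T unfolding topQ by blast
    then have "y i \<in> extensional (A i)"
      by (simp add: PiE_iff)
    then show ?thesis
      by (rule restrict_glue_blocks[OF disj \<open>i \<in> I\<close>])
  qed
  have "continuous_map (subtopology ?P ?S) ?Q ?F"
  proof (subst continuous_map_componentwise, intro conjI ballI)
    show "?F ` topspace (subtopology ?P ?S) \<subseteq> extensional I"
      by auto
  next
    fix i assume "i \<in> I"
    then have "continuous_map (subtopology ?P ?S) (product_topology X (A i)) (\<lambda>x. restrict x (A i))"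
      by (intro continuous_map_from_subtopology continuous_map_restrict) auto
    then show "continuous_map (subtopology ?P ?S) (subtopology (product_topology X (A i)) (T i)) (\<lambda>x. ?F x i)"
      using \<open>i \<in> I\<close> by (auto simp: continuous_map_in_subtopology)
  qed
  moreover have "continuous_map ?Q (subtopology ?P ?S) (glue_blocks A I)"
  proof -
    have "continuous_map ?Q ?P (glue_blocks A I)"
      using continuous_map_from_subtopology[OF continuous_map_glue_blocks[OF disj], where S="\<Pi>\<^sub>E i\<in>I. T i"]
      by (simp add: subtopology_product_topology)
    moreover have "glue_blocks A I y \<in> ?S" if "y \<in> topspace ?Q" for y
      using that restrict_glue unfolding topQ by (auto simp: glue_blocks_def)
    ultimately show ?thesis
      by (auto simp: continuous_map_in_subtopology)
  qed
  moreover have "glue_blocks A I (?F x) = x" if "x \<in> topspace (subtopology ?P ?S)" for x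
  proof
    fix v
    show "glue_blocks A I (?F x) v = x v"
    proof (cases "v \<in> (\<Union>i\<in>I. A i)")
      case True
      then obtain i where "i \<in> I" "v \<in> A i" by blast
      then show ?thesis
        by (simp add: glue_blocks_apply[OF disj])
    next
      case False
      with that show ?thesis
        by (simp add: glue_blocks_def extensional_def)
    qed
  qed
  moreover have "?F (glue_blocks A I y) = y" if "y \<in> topspace ?Q" for y
  proof
    fix i
    show "?F (glue_blocks A I y) i = y i"
      using that restrict_glue unfolding topQ by (cases "i \<in> I") (auto simp: extensional_def)
  qed
  ultimately show ?thesis
    unfolding homeomorphic_map_maps homeomorphic_maps_def by blast
qed

text \<open>For y on the boundary of the cube [0,1]^A, with m and M its minimum and maximum on A,
either m = 0 or M = 1, and s = m + M - 1 equals M - 1 \<le> 0 in the first case and m \<ge> 0 in the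
second. The map rescales y - m with a slope in [0, 1 + t] and adds the offset
max 0 ((1 + t) s - t). When s \<le> 0 the offset vanishes, so the minimum stays 0, and at t = 1
the slope vanishes as well; whenever the offset is positive the slope is 1 + t, which keeps the
maximum at 1.\<close>

definition collapse :: "real \<Rightarrow> 'a set \<Rightarrow> ('a \<Rightarrow> real) \<Rightarrow> 'a \<Rightarrow> real" where
  "collapse t A y =
     (let m = Min (y ` A); s = m + Max (y ` A) - 1
      in (\<lambda>v\<in>A. min 1 (min (1 + t) (1 - t + 4 * max 0 s) * (y v - m) + max 0 ((1 + t) * s - t))))"

lemma collapse_slope:
  fixes s t :: real
  assumes "0 \<le> t" "t \<le> 1" "t < (1 + t) * s"
  shows "min (1 + t) (1 - t + 4 * max 0 s) = 1 + t"
proof -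
  have "0 < s"
    using assms by (smt (verit) mult_nonneg_nonpos)
  moreover have "(1 + t) * s \<le> 2 * s"
    using assms \<open>0 < s\<close> by (intro mult_right_mono) auto
  ultimately have "t < 2 * s"
    using assms by linarith
  with \<open>0 < s\<close> show ?thesis
    by simp
qed

locale cube_boundary_point =
  fixes A :: "'a set" and y :: "'a \<Rightarrow> real"
  assumes finite_vertices: "finite A" and on_boundary: "restrict y A \<in> rmac A (bdry_simplex A)"
begin

abbreviation "m \<equiv> Min (y ` A)"
abbreviation "M \<equiv> Max (y ` A)"

lemma nonempty: "A \<noteq> {}"
  using on_boundary by (auto simp: rmac_bdry_simplex)

lemma in_unit_interval: "v \<in> A \<Longrightarrow> 0 \<le> y v \<and> y v \<le> 1"
  using on_boundary by (auto simp: rmac_bdry_simplex)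

lemma min_le: "v \<in> A \<Longrightarrow> m \<le> y v"
  using finite_vertices by simp

lemma le_max: "v \<in> A \<Longrightarrow> y v \<le> M"
  using finite_vertices by simp

lemma min_attained: obtains v where "v \<in> A" "y v = m"
proof -
  have "m \<in> y ` A"
    using finite_vertices nonempty by (intro Min_in) auto
  with that show thesis by (metis imageE)
qed

lemma max_attained: obtains v where "v \<in> A" "y v = M"
proof -
  have "M \<in> y ` A"
    using finite_vertices nonempty by (intro Max_in) auto
  with that show thesis by (metis imageE)
qed

lemma min_nonneg: "0 \<le> m"
  by (metis min_attained in_unit_interval)

lemma max_le_one: "M \<le> 1"
  by (metis max_attained in_unit_interval)

lemma min_zero_or_max_one: "m = 0 \<or> M = 1"
proof -
  obtain w where "w \<in> A" "y w = 0 \<or> y w = 1"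
    using on_boundary by (auto simp: rmac_bdry_simplex)
  then show ?thesis
    using min_le[of w] le_max[of w] min_nonneg max_le_one by auto
qed

lemma has_zero_iff: "(\<exists>v\<in>A. y v = 0) \<longleftrightarrow> m = 0"
  by (metis min_attained min_le min_nonneg order_antisym)

abbreviation "height \<equiv> m + M - 1"

lemma collapse_eq:
  "v \<in> A \<Longrightarrow> collapse t A y v =
     min 1 (min (1 + t) (1 - t + 4 * max 0 height) * (y v - m) + max 0 ((1 + t) * height - t))"
  by (simp add: collapse_def Let_def)

lemma height_cases: "(m = 0 \<and> height \<le> 0) \<or> (M = 1 \<and> height = m)"
  using min_zero_or_max_one max_le_one by auto

lemma collapse_offset_zero:
  assumes "m = 0" "0 \<le> t"
  shows "max 0 ((1 + t) * height - t) = 0"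
proof -
  have "(1 + t) * height \<le> 0"
    using height_cases assms by (auto intro: mult_nonneg_nonpos)
  with assms show ?thesis by simp
qed

lemma collapse_in_rmac:
  assumes t: "0 \<le> t" "t \<le> 1"
  shows "collapse t A y \<in> rmac A (bdry_simplex A)"
proof -
  define R where "R = min (1 + t) (1 - t + 4 * max 0 height)"
  define P where "P = max 0 ((1 + t) * height - t)"
  have val: "v \<in> A \<Longrightarrow> collapse t A y v = min 1 (R * (y v - m) + P)" for v
    by (simp add: collapse_eq R_def P_def)
  have "0 \<le> collapse t A y v \<and> collapse t A y v \<le> 1" if "v \<in> A" for v
  proof -
    have "0 \<le> R" "0 \<le> y v - m" "0 \<le> P"
      using t min_le[OF that] by (auto simp: R_def P_def)
    then show ?thesis
      by (simp add: val[OF that])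
  qed
  moreover have "\<exists>v\<in>A. collapse t A y v \<in> {0,1}"
  proof (cases "(1 + t) * height \<le> t")
    case True
    obtain u where "u \<in> A" "y u = m" by (rule min_attained)
    with True show ?thesis
      by (intro bexI[of _ u]) (auto simp: val P_def)
  next
    case False
    then have "0 < (1 + t) * height"
      using t by linarith
    then have "M = 1" "height = m"
      using height_cases t by (auto simp: zero_less_mult_iff)
    obtain u where "u \<in> A" "y u = M" by (rule max_attained)
    have "R = 1 + t" "P = (1 + t) * m - t"
      using collapse_slope t False \<open>height = m\<close> by (auto simp: R_def P_def)
    then have "collapse t A y u = 1"
      using \<open>u \<in> A\<close> \<open>y u = M\<close> \<open>M = 1\<close> by (simp add: val algebra_simps)
    with \<open>u \<in> A\<close> show ?thesis by blast
  qed
  moreover have "collapse t A y \<in> extensional A"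
    by (simp add: collapse_def Let_def)
  ultimately show ?thesis
    unfolding rmac_bdry_simplex by auto
qed

lemma collapse_0: "collapse 0 A y = restrict y A"
proof
  fix v
  have "max 0 height = m"
    using height_cases min_nonneg by auto
  then show "collapse 0 A y v = restrict y A v"
    using in_unit_interval[of v] by (cases "v \<in> A") (auto simp: collapse_eq collapse_def)
qed

lemma collapse_keeps_zero:
  assumes "\<exists>v\<in>A. y v = 0" "0 \<le> t"
  shows "\<exists>v\<in>A. collapse t A y v = 0"
proof -
  obtain u where "u \<in> A" "y u = m" by (rule min_attained)
  then show ?thesis
    using collapse_offset_zero assms has_zero_iff by (intro bexI[of _ u]) (auto simp: collapse_eq)
qed

lemma collapse_zero:
  assumes "\<forall>v\<in>A. y v = 0" "0 \<le> t"
  shows "\<forall>v\<in>A. collapse t A y v = 0"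
  using collapse_offset_zero assms has_zero_iff nonempty by (auto simp: collapse_eq)

lemma collapse_1:
  assumes "\<exists>v\<in>A. y v = 0"
  shows "\<forall>v\<in>A. collapse 1 A y v = 0"
proof -
  have "m = 0" "height \<le> 0"
    using assms has_zero_iff height_cases by auto
  then show ?thesis
    using collapse_offset_zero[of 1] by (auto simp: collapse_eq)
qed

end

lemma continuous_map_Min:
  assumes "finite I" "I \<noteq> {}" "\<And>i. i \<in> I \<Longrightarrow> continuous_map X euclideanreal (f i)"
  shows "continuous_map X euclideanreal (\<lambda>x. Min ((\<lambda>i. f i x) ` I))"
  using assms
proof (induction I rule: finite_ne_induct)
  case (insert i I)
  then show ?case
    by (simp add: Min_insert continuous_map_real_min)
qed simp

lemma continuous_map_Max:
  assumes "finite I" "I \<noteq> {}" "\<And>i. i \<in> I \<Longrightarrow> continuous_map X euclideanreal (f i)"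
  shows "continuous_map X euclideanreal (\<lambda>x. Max ((\<lambda>i. f i x) ` I))"
  using assms
proof (induction I rule: finite_ne_induct)
  case (insert i I)
  then show ?case
    by (simp add: Max_insert continuous_map_real_max)
qed simp

lemma continuous_map_collapse:
  assumes "finite A" "A \<noteq> {}" "A \<subseteq> W"
  shows "continuous_map (prod_topology euclideanreal (product_topology (\<lambda>_. euclideanreal) W))
           (product_topology (\<lambda>_. euclideanreal) A) (\<lambda>p. collapse (fst p) A (snd p))"
proof (subst continuous_map_componentwise, intro conjI ballI)
  let ?Z = "prod_topology euclideanreal (product_topology (\<lambda>_. euclideanreal) W)"
  show "(\<lambda>p. collapse (fst p) A (snd p)) ` topspace ?Z \<subseteq> extensional A"
    by (auto simp: collapse_def Let_def)
  have coord: "continuous_map ?Z euclideanreal (\<lambda>p. snd p u)" if "u \<in> A" for u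
    using that assms(3) by (auto intro!: continuous_intros)
  have extremes: "continuous_map ?Z euclideanreal (\<lambda>p. Min (snd p ` A))"
    "continuous_map ?Z euclideanreal (\<lambda>p. Max (snd p ` A))"
    using continuous_map_Min[of A ?Z "\<lambda>u p. snd p u"] continuous_map_Max[of A ?Z "\<lambda>u p. snd p u"]
      assms coord by auto
  fix v assume "v \<in> A"
  then show "continuous_map ?Z euclideanreal (\<lambda>p. collapse (fst p) A (snd p) v)"
    by (simp add: collapse_def Let_def) (intro continuous_intros extremes coord; simp)
qed

lemma homotopy_equivalence_map_inclusion:
  fixes H :: "real \<times> 'a \<Rightarrow> 'a"
  assumes ST: "S \<subseteq> T" and T: "T \<subseteq> topspace X"
    and H: "continuous_map (prod_topology (top_of_set {0..1}) (subtopology X T)) X H"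
    and H0: "\<And>x. x \<in> T \<Longrightarrow> H (0, x) = x"
    and HS: "\<And>t x. t \<in> {0..1} \<Longrightarrow> x \<in> S \<Longrightarrow> H (t, x) \<in> S"
    and HT: "\<And>t x. t \<in> {0..1} \<Longrightarrow> x \<in> T \<Longrightarrow> H (t, x) \<in> T"
    and H1: "\<And>x. x \<in> T \<Longrightarrow> H (1, x) \<in> S"
  shows "homotopy_equivalence_map (subtopology X S) (subtopology X T) id"
proof -
  have topS: "topspace (subtopology X S) = S" and topT: "topspace (subtopology X T) = T"
    using ST T by auto
  have restrict_S: "prod_topology (top_of_set {0..1}) (subtopology X S) =
        subtopology (prod_topology (top_of_set {0..1}) (subtopology X T)) ({0..1} \<times> S)"
    using ST by (simp add: subtopology_Times subtopology_subtopology Int_absorb1)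
  have "continuous_map (prod_topology (top_of_set {0..1}) (subtopology X S)) X H"
    unfolding restrict_S by (rule continuous_map_from_subtopology[OF H])
  then have HS_cont: "continuous_map (prod_topology (top_of_set {0..1}) (subtopology X S)) (subtopology X S) H"
    using HS by (auto simp: continuous_map_in_subtopology)
  have HT_cont: "continuous_map (prod_topology (top_of_set {0..1}) (subtopology X T)) (subtopology X T) H"
    using H HT topT by (auto simp: continuous_map_in_subtopology)
  have homotopic_end: "homotopic_with (\<lambda>h. True) Y Y (\<lambda>x. H (1, x)) id"
    if "continuous_map (prod_topology (top_of_set {0..1}) Y) Y H" "\<And>x. x \<in> topspace Y \<Longrightarrow> H (0, x) = x"
    for Y
  proof -
    have "homotopic_with (\<lambda>h. True) Y Y (\<lambda>x. H (0, x)) (\<lambda>x. H (1, x))"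
      unfolding homotopic_with_def using that(1) by blast
    then show ?thesis
      by (subst homotopic_with_sym, rule homotopic_with_eq) (auto simp: that(2))
  qed
  have "continuous_map (subtopology X S) (subtopology X T) id"
    using ST topS by (auto simp: continuous_map_in_subtopology)
  moreover have "continuous_map (subtopology X T) (subtopology X S) (\<lambda>x. H (1, x))"
  proof -
    have "continuous_map (subtopology X T) (prod_topology (top_of_set {0..1}) (subtopology X T)) (Pair (1::real))"
      by (auto intro!: continuous_intros)
    from continuous_map_compose[OF this H]
    show ?thesis
      using H1 topT by (auto simp: continuous_map_in_subtopology o_def)
  qed
  moreover have "homotopic_with (\<lambda>h. True) (subtopology X S) (subtopology X S) ((\<lambda>x. H (1, x)) \<circ> id) id"
    using homotopic_end[OF HS_cont] H0 ST topS by auto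
  moreover have "homotopic_with (\<lambda>h. True) (subtopology X T) (subtopology X T) (id \<circ> (\<lambda>x. H (1, x))) id"
    using homotopic_end[OF HT_cont] H0 topT by auto
  ultimately show ?thesis
    unfolding homotopy_equivalence_map_def by blast
qed

lemma rmac_fw_card_minus_one:
  assumes "finite V" "V \<noteq> {}"
  shows "rmac_fw V K (card V - 1) = {x \<in> rmac V K. \<exists>v\<in>V. x v = 0}"
proof -
  have "card V - (card V - 1) = 1"
    using assms by (simp add: Suc_leI card_gt_0_iff)
  moreover have "1 \<le> card {v \<in> V. x v = 0} \<longleftrightarrow> (\<exists>v\<in>V. x v = 0)" for x :: "'a \<Rightarrow> real"
    using assms(1) by (auto simp: Suc_le_eq card_gt_0_iff)
  ultimately show ?thesis
    by (simp add: rmac_fw_def)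
qed

locale vertex_partition =
  fixes A :: "nat \<Rightarrow> 'a set" and r :: nat
  assumes finite_block: "\<And>i. i < r \<Longrightarrow> finite (A i)"
    and block_nonempty: "\<And>i. i < r \<Longrightarrow> A i \<noteq> {}"
    and blocks_disjoint: "\<And>i j. i < r \<Longrightarrow> j < r \<Longrightarrow> i \<noteq> j \<Longrightarrow> A i \<inter> A j = {}"
begin

abbreviation "V \<equiv> \<Union>i<r. A i"
abbreviation "L \<equiv> cx_join (\<lambda>i. bdry_simplex (A i)) r"
abbreviation "PT \<equiv> product_topology (\<lambda>_. euclideanreal) V"

abbreviation "fat_wedge \<equiv> {x \<in> rmac V L. \<exists>i<r. \<forall>v\<in>A i. x v = 0}"
abbreviation "penultimate_stage \<equiv> {x \<in> rmac V L. \<exists>v\<in>V. x v = 0}"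

lemma rmac_join:
  "rmac V L = {x \<in> extensional V. \<forall>i<r. restrict x (A i) \<in> rmac (A i) (bdry_simplex (A i))}"
  by (rule rmac_cx_join) (use blocks_disjoint in \<open>auto simp: bdry_simplex_def\<close>)

lemma boundary_point: "x \<in> rmac V L \<Longrightarrow> i < r \<Longrightarrow> cube_boundary_point (A i) x"
  using finite_block by unfold_locales (auto simp: rmac_join)

lemma disjoint_blocks: "disjoint_family_on A {..<r}"
  using blocks_disjoint by (auto simp: disjoint_family_on_def)

definition deformation :: "real \<times> ('a \<Rightarrow> real) \<Rightarrow> 'a \<Rightarrow> real" where
  "deformation p = glue_blocks A {..<r} (\<lambda>i\<in>{..<r}. collapse (fst p) (A i) (snd p))"

lemma deformation_block: "i < r \<Longrightarrow> v \<in> A i \<Longrightarrow> deformation p v = collapse (fst p) (A i) (snd p) v"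
  by (simp add: deformation_def glue_blocks_apply[OF disjoint_blocks])

lemma restrict_deformation:
  assumes "i < r"
  shows "restrict (deformation (t, x)) (A i) = collapse t (A i) x"
proof -
  have "collapse t (A i) x \<in> extensional (A i)"
    by (simp add: collapse_def Let_def)
  with assms show ?thesis
    unfolding deformation_def by (subst restrict_glue_blocks[OF disjoint_blocks]) auto
qed

lemma deformation_in_rmac:
  assumes "x \<in> rmac V L" "t \<in> {0..1}"
  shows "deformation (t, x) \<in> rmac V L"
proof -
  have "restrict (deformation (t, x)) (A i) \<in> rmac (A i) (bdry_simplex (A i))" if "i < r" for i
    using cube_boundary_point.collapse_in_rmac[OF boundary_point[OF assms(1) that]] assms(2)
    by (simp add: restrict_deformation[OF that])
  moreover have "deformation (t, x) \<in> extensional V"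
    by (simp add: deformation_def glue_blocks_def)
  ultimately show ?thesis
    by (simp add: rmac_join)
qed

lemma deformation_0:
  assumes "x \<in> rmac V L"
  shows "deformation (0, x) = x"
proof
  fix v
  show "deformation (0, x) v = x v"
  proof (cases "v \<in> V")
    case True
    then obtain i where "i < r" "v \<in> A i" by blast
    with cube_boundary_point.collapse_0[OF boundary_point[OF assms \<open>i < r\<close>]] show ?thesis
      by (simp add: deformation_block)
  next
    case False
    with assms show ?thesis
      by (auto simp: deformation_def glue_blocks_def rmac_join extensional_def)
  qed
qed

lemma deformation_penultimate_stage:
  assumes "x \<in> penultimate_stage" "t \<in> {0..1}"
  shows "deformation (t, x) \<in> penultimate_stage"
proof -
  from assms obtain i v where "i < r" "v \<in> A i" "x v = 0" by blast
  with cube_boundary_point.collapse_keeps_zero[OF boundary_point[of x i]] assms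
  obtain w where "w \<in> A i" "deformation (t, x) w = 0"
    by (auto simp: deformation_block)
  with assms \<open>i < r\<close> deformation_in_rmac show ?thesis by blast
qed

lemma deformation_fat_wedge:
  assumes "x \<in> fat_wedge" "t \<in> {0..1}"
  shows "deformation (t, x) \<in> fat_wedge"
proof -
  from assms obtain i where "i < r" "\<forall>v\<in>A i. x v = 0" by blast
  with cube_boundary_point.collapse_zero[OF boundary_point[of x i]] assms
  have "\<forall>v\<in>A i. deformation (t, x) v = 0"
    by (auto simp: deformation_block)
  with assms \<open>i < r\<close> deformation_in_rmac show ?thesis by blast
qed

lemma deformation_1:
  assumes "x \<in> penultimate_stage"
  shows "deformation (1, x) \<in> fat_wedge"
proof -
  from assms obtain i v where "i < r" "v \<in> A i" "x v = 0" by blast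
  with cube_boundary_point.collapse_1[OF boundary_point[of x i]] assms
  have "\<forall>v\<in>A i. deformation (1, x) v = 0"
    by (auto simp: deformation_block)
  with assms \<open>i < r\<close> deformation_in_rmac show ?thesis by auto
qed

lemma continuous_map_deformation: "continuous_map (prod_topology euclideanreal PT) PT deformation"
proof -
  have "continuous_map (prod_topology euclideanreal PT)
          (product_topology (\<lambda>i. product_topology (\<lambda>_. euclideanreal) (A i)) {..<r})
          (\<lambda>p. \<lambda>i\<in>{..<r}. collapse (fst p) (A i) (snd p))"
  proof (subst continuous_map_componentwise, intro conjI ballI)
    fix i assume "i \<in> {..<r}"
    then show "continuous_map (prod_topology euclideanreal PT) (product_topology (\<lambda>_. euclideanreal) (A i))
                 (\<lambda>p. (\<lambda>i\<in>{..<r}. collapse (fst p) (A i) (snd p)) i)"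
      using finite_block block_nonempty by (simp add: continuous_map_collapse UN_upper)
  qed auto
  from continuous_map_compose[OF this continuous_map_glue_blocks[OF disjoint_blocks]]
  show ?thesis
    by (simp add: o_def flip: deformation_def)
qed

lemma homeomorphic_map_join:
  "homeomorphic_map (rmac_top V L) (product_topology (\<lambda>i. rmac_top (A i) (bdry_simplex (A i))) {..<r})
     (\<lambda>x. \<lambda>i\<in>{..<r}. restrict x (A i))"
proof -
  have "rmac (A i) (bdry_simplex (A i)) \<subseteq> topspace (product_topology (\<lambda>_. euclideanreal) (A i))" for i
    by (auto simp: rmac_bdry_simplex extensional_def)
  moreover have "rmac V L =
      {x \<in> extensional V. \<forall>i\<in>{..<r}. restrict x (A i) \<in> rmac (A i) (bdry_simplex (A i))}"
    unfolding rmac_join by auto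
  ultimately show ?thesis
    unfolding rmac_top_def by (simp add: homeomorphic_map_restrict_blocks[OF disjoint_blocks])
qed

lemma homotopy_equivalence_fat_wedge:
  "homotopy_equivalence_map (subtopology PT fat_wedge) (subtopology PT penultimate_stage) id"
proof (rule homotopy_equivalence_map_inclusion)
  show "fat_wedge \<subseteq> penultimate_stage"
    using block_nonempty by fastforce
  show "penultimate_stage \<subseteq> topspace PT"
    by (auto simp: rmac_join extensional_def)
  have "prod_topology (top_of_set {0..1}) (subtopology PT penultimate_stage) =
        subtopology (prod_topology euclideanreal PT) ({0..1} \<times> penultimate_stage)"
    by (simp add: subtopology_Times)
  then show "continuous_map (prod_topology (top_of_set {0..1}) (subtopology PT penultimate_stage)) PT deformation"
    by (simp add: continuous_map_from_subtopology continuous_map_deformation)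
qed (use deformation_0 deformation_fat_wedge deformation_penultimate_stage deformation_1 in auto)

end

theorem lemma4p3:
  fixes A :: "nat \<Rightarrow> 'a set" and r :: nat
  assumes "r \<ge> 1"
    and "\<And>i. i < r \<Longrightarrow> finite (A i)"
    and "\<And>i. i < r \<Longrightarrow> A i \<noteq> {}"
    and "\<And>i j. i < r \<Longrightarrow> j < r \<Longrightarrow> i \<noteq> j \<Longrightarrow> A i \<inter> A j = {}"
  defines "V \<equiv> (\<Union>i<r. A i)"
    and "L \<equiv> cx_join (\<lambda>i. bdry_simplex (A i)) r"
  shows "homeomorphic_map (rmac_top V L)
           (product_topology (\<lambda>i. rmac_top (A i) (bdry_simplex (A i))) {..<r})
           (\<lambda>x. \<lambda>i\<in>{..<r}. restrict x (A i)) \<and>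
         homotopy_equivalence_map
           (subtopology (rmac_top V L) {x \<in> rmac V L. \<exists>i<r. \<forall>v\<in>A i. x v = 0})
           (subtopology (rmac_top V L) (rmac_fw V L (card V - 1)))
           id"
proof -
  interpret vertex_partition A r
    using assms(2-4) by unfold_locales
  have "finite V" "V \<noteq> {}"
    using assms(1-3) by (auto simp: V_def Suc_le_eq)
  then have "rmac_fw V L (card V - 1) = {x \<in> rmac V L. \<exists>v\<in>V. x v = 0}"
    by (rule rmac_fw_card_minus_one)
  moreover have "subtopology (rmac_top V L) S = subtopology (product_topology (\<lambda>_. euclideanreal) V) S"
    if "S \<subseteq> rmac V L" for S
    using that by (simp add: rmac_top_def subtopology_subtopology Int_absorb1)
  ultimately show ?thesis
    using homeomorphic_map_join homotopy_equivalence_fat_wedge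
    by (simp add: V_def L_def Collect_conj_eq)
qed

end
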